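(* Let $\mathcal{G}$ be a multi-layer graph with $l$ layers, $d,k\in\mathbb{N}$ with $k\ge1$, and $\mathcal{R}$ a collection of exactly $k$ subsets of $V(\mathcal{G})$. Let $L\subseteq\{1,\dots,l\}$ and $j\in\{1,\dots,l\}$ with $j>\max(L)$. If $|C^d_L(\mathcal{G})\cap C^d(G_j)|<\frac1k|\mathsf{Cov}(\mathcal{R})|+|\Delta(\mathcal{R},C^*(\mathcal{R}))|$, then $|\mathsf{Cov}((\mathcal{R}-\{C^*(\mathcal{R})\})\cup\{C^d_{L\cup\{j\}}(\mathcal{G})\})|<(1+\frac1k)|\mathsf{Cov}(\mathcal{R})|$.
   Context: A multi-layer graph $\mathcal{G}=(V,E_1,\dots,E_l)$ consists of a finite vertex set $V$ and edge sets $E_i$ of simple undirected graphs $G_i=(V,E_i)$. A graph is $d$-dense if every vertex has degree at least $d$; the $d$-coherent core $C^d_L(\mathcal{G})$ is the unique maximal $S\subseteq V$ such that the induced subgraph $G_i[S]$ is $d$-dense for all $i\in L$ (with $C^d_\emptyset(\mathcal{G})=V$). $C^d(G_j)$ is the $d$-core of $G_j$, i.e., the maximal $S$ with $G_j[S]$ $d$-dense (equal to $C^d_{\{j\}}(\mathcal{G})$). $\max(\emptyset)=-\infty$. For a collection $\mathcal{R}$ of sets, $\mathsf{Cov}(\mathcal{R})=\bigcup_{R\in\mathcal{R}}R$; for $C'\in\mathcal{R}$, $\Delta(\mathcal{R},C')=C'-\mathsf{Cov}(\mathcal{R}-\{C'\})$; $C^*(\mathcal{R})$ is a fixed element of $\mathcal{R}$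 minimizing $|\Delta(\mathcal{R},C')|$. *)

theory Defs
  imports Complex_Main
begin

definition multilayer_graph :: "'a set \<Rightarrow> (nat \<Rightarrow> 'a \<Rightarrow> 'a \<Rightarrow> bool) \<Rightarrow> nat \<Rightarrow> bool" where
  "multilayer_graph V E l \<longleftrightarrow> finite V \<and>
     (\<forall>i\<in>{1..l}. (\<forall>u v. E i u v \<longrightarrow> u \<in> V \<and> v \<in> V) \<and>
                 (\<forall>u v. E i u v \<longrightarrow> E i v u) \<and> (\<forall>u. \<not> E i u u))"

definition dense :: "(nat \<Rightarrow> 'a \<Rightarrow> 'a \<Rightarrow> bool) \<Rightarrow> nat \<Rightarrow> nat \<Rightarrow> 'a set \<Rightarrow> bool" where
  "dense E i d S \<longleftrightarrow> (\<forall>u\<in>S. d \<le> card {v\<in>S. E i u v})"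

text \<open>The d-coherent core C^d_L: the maximal S \<subseteq> V with G_i[S] d-dense for all i in L
  (the union of all such sets; equals V for L empty).\<close>
definition coherent_core :: "'a set \<Rightarrow> (nat \<Rightarrow> 'a \<Rightarrow> 'a \<Rightarrow> bool) \<Rightarrow> nat \<Rightarrow> nat set \<Rightarrow> 'a set" where
  "coherent_core V E d L = \<Union>{S. S \<subseteq> V \<and> (\<forall>i\<in>L. dense E i d S)}"

definition d_core :: "'a set \<Rightarrow> (nat \<Rightarrow> 'a \<Rightarrow> 'a \<Rightarrow> bool) \<Rightarrow> nat \<Rightarrow> nat \<Rightarrow> 'a set" where
  "d_core V E d j = coherent_core V E d {j}"

definition Cov :: "'a set set \<Rightarrow> 'a set" where
  "Cov R = \<Union>R"

definition Delta :: "'a set set \<Rightarrow> 'a set \<Rightarrow> 'a set" where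
  "Delta R C = C - Cov (R - {C})"

end

theory Submission
  imports Defs
begin

text \<open>Swapping C* for the new core N removes exactly the vertices Delta(R, C*) covered
  only by C* and adds at most |N| vertices, so the coverage grows by at most
  |N| - |Delta(R, C*)|. Since N is d-dense in every layer of L and in layer j,
  it lies in the intersection of C^d_L and the d-core of G_j, whose size the
  hypothesis bounds by |Cov R| / k + |Delta(R, C*)|.\<close>

lemma coherent_core_subset: "coherent_core V E d L \<subseteq> V"
  unfolding coherent_core_def by blast

lemma coherent_core_antimono:
  assumes "L \<subseteq> L'"
  shows "coherent_core V E d L' \<subseteq> coherent_core V E d L"
  using assms unfolding coherent_core_def by blast

lemma coherent_core_insert_subset:
  "coherent_core V E d (L \<union> {j}) \<subseteq> coherent_core V E d L \<inter> d_core V E d j"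
  unfolding d_core_def
  by (rule Int_greatest; rule coherent_core_antimono; blast)

lemma card_coherent_core_insert_le:
  assumes "finite V"
  shows "card (coherent_core V E d (L \<union> {j})) \<le> card (coherent_core V E d L \<inter> d_core V E d j)"
proof (rule card_mono[OF _ coherent_core_insert_subset])
  have "coherent_core V E d L \<inter> d_core V E d j \<subseteq> V"
    using coherent_core_subset[of V E d L] by blast
  then show "finite (coherent_core V E d L \<inter> d_core V E d j)"
    using assms by (rule finite_subset)
qed

lemma Cov_split_Delta:
  assumes "C \<in> R"
  shows "Cov R = Cov (R - {C}) \<union> Delta R C" and "Cov (R - {C}) \<inter> Delta R C = {}"
  using assms unfolding Delta_def Cov_def by auto

lemma card_Cov_split_Delta:
  assumes "finite (Cov R)" "C \<in> R"
  shows "card (Cov R) = card (Cov (R - {C})) + card (Delta R C)"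
proof -
  note split = Cov_split_Delta[OF assms(2)]
  have "finite (Cov (R - {C}))" "finite (Delta R C)"
    using assms(1) unfolding split(1) finite_Un by simp_all
  then show ?thesis
    unfolding split(1) by (rule card_Un_disjoint[OF _ _ split(2)])
qed

lemma Cov_replace: "Cov ((R - {C}) \<union> {N}) = Cov (R - {C}) \<union> N"
  unfolding Cov_def by auto

lemma card_Cov_replace_le:
  assumes "finite (Cov R)" "C \<in> R"
  shows "card (Cov ((R - {C}) \<union> {N})) + card (Delta R C) \<le> card (Cov R) + card N"
proof -
  have "card (Cov ((R - {C}) \<union> {N})) \<le> card (Cov (R - {C})) + card N"
    unfolding Cov_replace by (rule card_Un_le)
  then show ?thesis
    using card_Cov_split_Delta[OF assms] by linarith
qed

theorem lemma3:
  fixes V :: "'a set" and E :: "nat \<Rightarrow> 'a \<Rightarrow> 'a \<Rightarrow> bool" and l d k j :: nat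
    and L :: "nat set" and R :: "'a set set" and Cstar :: "'a set"
  assumes G: "multilayer_graph V E l"
    and k: "k \<ge> 1"
    and R: "finite R" "card R = k" "\<forall>C\<in>R. C \<subseteq> V"
    and Cstar: "Cstar \<in> R" "\<forall>C'\<in>R. card (Delta R Cstar) \<le> card (Delta R C')"
    and L: "L \<subseteq> {1..l}"
    and j: "j \<in> {1..l}" "\<forall>i\<in>L. i < j"
    and hyp: "real (card (coherent_core V E d L \<inter> d_core V E d j))
              < real (card (Cov R)) / real k + real (card (Delta R Cstar))"
  shows "real (card (Cov ((R - {Cstar}) \<union> {coherent_core V E d (L \<union> {j})})))
         < (1 + 1 / real k) * real (card (Cov R))"
proof -
  have "finite V" using G by (simp add: multilayer_graph_def)
  moreover have "Cov R \<subseteq> V" using R(3) unfolding Cov_def by blast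
  ultimately have "finite (Cov R)" by (rule finite_subset[rotated])
  then have "card (Cov ((R - {Cstar}) \<union> {coherent_core V E d (L \<union> {j})})) + card (Delta R Cstar)
      \<le> card (Cov R) + card (coherent_core V E d (L \<union> {j}))"
    by (rule card_Cov_replace_le[OF _ Cstar(1)])
  moreover have "card (coherent_core V E d (L \<union> {j})) \<le> card (coherent_core V E d L \<inter> d_core V E d j)"
    using \<open>finite V\<close> by (rule card_coherent_core_insert_le)
  ultimately have "real (card (Cov ((R - {Cstar}) \<union> {coherent_core V E d (L \<union> {j})})))
      < real (card (Cov R)) + real (card (Cov R)) / real k"
    using hyp by linarith
  then show ?thesis
    by (simp add: distrib_right)
qed

end
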